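(* For all $0<b<B\le1$ and every integer $n\ge1$ there exists an instance $\langle A,f,c\rangle$ with $|A|=n$, $f$ additive, and $p(\{i\})\le b$ for all $i\in A$, such that $$\frac{\textsc{Max-Reward}(B)}{\textsc{Max-Reward}(b)}=\frac{\textsc{Max-Welfare}(B)}{\textsc{Max-Welfare}(b)}=\min\big(\lceil 2B/b\rceil-1,\,n\big).$$
   Context: An instance $\langle A,f,c\rangle$ consists of a finite set $A$ of agents, a monotone nondecreasing $f:2^A\to[0,1]$, and costs $c_i\ge0$. For $S\subseteq A$, $i\in S$: $f_S(i)=f(S)-f(S\setminus\{i\})$; $p(S)=\sum_{i\in S}c_i/f_S(i)$ (conventions: $0$ if $c_i=0=f_S(i)$, $\infty$ if $c_i>0=f_S(i)$). $f$ is additive if $f(S)=\sum_{i\in S}f(\{i\})$. $\textsc{Max-Reward}(B)=\max\{f(S):p(S)\le B\}$ and $\textsc{Max-Welfare}(B)=\max\{f(S)-\sum_{i\in S}c_i:p(S)\le B\}$. *)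

theory Defs
  imports "HOL-Analysis.Analysis" "HOL-Library.Extended_Real"
begin

definition is_instance :: "'a set \<Rightarrow> ('a set \<Rightarrow> real) \<Rightarrow> ('a \<Rightarrow> real) \<Rightarrow> bool" where
  "is_instance A f c \<longleftrightarrow> finite A
     \<and> (\<forall>S T. S \<subseteq> T \<and> T \<subseteq> A \<longrightarrow> f S \<le> f T)
     \<and> (\<forall>S. S \<subseteq> A \<longrightarrow> 0 \<le> f S \<and> f S \<le> 1)
     \<and> (\<forall>i\<in>A. 0 \<le> c i)"

definition additive_on :: "'a set \<Rightarrow> ('a set \<Rightarrow> real) \<Rightarrow> bool" where
  "additive_on A f \<longleftrightarrow> (\<forall>S. S \<subseteq> A \<longrightarrow> f S = (\<Sum>i\<in>S. f {i}))"

definition marginal :: "('a set \<Rightarrow> real) \<Rightarrow> 'a set \<Rightarrow> 'a \<Rightarrow> real" where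
  "marginal f S i = f S - f (S - {i})"

definition pay_term :: "('a set \<Rightarrow> real) \<Rightarrow> ('a \<Rightarrow> real) \<Rightarrow> 'a set \<Rightarrow> 'a \<Rightarrow> ereal" where
  "pay_term f c S i =
     (if marginal f S i = 0 then (if c i = 0 then 0 else \<infinity>)
      else ereal (c i / marginal f S i))"

definition price :: "('a set \<Rightarrow> real) \<Rightarrow> ('a \<Rightarrow> real) \<Rightarrow> 'a set \<Rightarrow> ereal" where
  "price f c S = (\<Sum>i\<in>S. pay_term f c S i)"

definition max_reward :: "'a set \<Rightarrow> ('a set \<Rightarrow> real) \<Rightarrow> ('a \<Rightarrow> real) \<Rightarrow> real \<Rightarrow> real" where
  "max_reward A f c B = Max {f S | S. S \<subseteq> A \<and> price f c S \<le> ereal B}"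

definition max_welfare :: "'a set \<Rightarrow> ('a set \<Rightarrow> real) \<Rightarrow> ('a \<Rightarrow> real) \<Rightarrow> real \<Rightarrow> real" where
  "max_welfare A f c B = Max {f S - (\<Sum>i\<in>S. c i) | S. S \<subseteq> A \<and> price f c S \<le> ereal B}"

end

theory Submission
  imports Defs
begin

text \<open>Take n identical agents, each adding 1/n to an additive reward and costing p/n. Every marginal
  contribution is 1/n, so a team of j agents has price j p, and both reward and welfare grow linearly
  in the team size. With k = \<lceil>2B/b\<rceil> - 1 and p = B/k we get p \<le> b < 2p: budget b affords exactly one
  agent and budget B affords min(k, n) of them.\<close>

definition uniform_reward :: "nat \<Rightarrow> 'a set \<Rightarrow> real" where
  "uniform_reward n S = real (card S) / real n"

definition uniform_cost :: "nat \<Rightarrow> real \<Rightarrow> 'a \<Rightarrow> real" where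
  "uniform_cost n p i = p / real n"

lemma is_instance_uniform:
  assumes "finite A" "card A = n" "0 \<le> p"
  shows "is_instance A (uniform_reward n) (uniform_cost n p)"
  unfolding is_instance_def
proof (intro conjI allI impI ballI)
  fix S T assume "S \<subseteq> T \<and> T \<subseteq> A"
  then have "card S \<le> card T" using assms(1) by (meson card_mono rev_finite_subset)
  then show "uniform_reward n S \<le> uniform_reward n T"
    unfolding uniform_reward_def by (simp add: divide_right_mono)
next
  fix S assume "S \<subseteq> A"
  then have "card S \<le> n" using assms(1,2) card_mono by blast
  then show "uniform_reward n S \<le> 1" unfolding uniform_reward_def by (auto simp: divide_le_eq_1)
qed (use assms in \<open>auto simp: uniform_reward_def uniform_cost_def\<close>)

lemma additive_on_uniform: "finite A \<Longrightarrow> additive_on A (uniform_reward n)"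
  unfolding additive_on_def uniform_reward_def
  by (auto simp: sum_divide_distrib[symmetric] intro: rev_finite_subset)

lemma price_uniform:
  assumes "finite S" "n > 0"
  shows "price (uniform_reward n) (uniform_cost n p) S = ereal (real (card S) * p)"
proof -
  have "marginal (uniform_reward n) S i = 1 / real n" if "i \<in> S" for i
  proof -
    have "real (card S) = real (card (S - {i})) + 1"
      using card_Suc_Diff1[OF assms(1) that] by (metis of_nat_Suc add.commute)
    then show ?thesis unfolding marginal_def uniform_reward_def by (simp add: diff_divide_distrib[symmetric])
  qed
  then have "pay_term (uniform_reward n) (uniform_cost n p) S i = ereal p" if "i \<in> S" for i
    using that assms(2) by (simp add: pay_term_def uniform_cost_def)
  then show ?thesis unfolding price_def by simp
qed

lemma Max_mono_card_subsets:
  fixes g :: "nat \<Rightarrow> real"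
  assumes "finite A" "j\<^sub>0 \<le> card A" "P j\<^sub>0" "\<And>j. P j \<Longrightarrow> j \<le> card A \<Longrightarrow> j \<le> j\<^sub>0" "mono g"
  shows "Max {g (card S) | S. S \<subseteq> A \<and> P (card S)} = g j\<^sub>0"
proof (rule Max_eqI)
  have "{g (card S) | S. S \<subseteq> A \<and> P (card S)} \<subseteq> (\<lambda>S. g (card S)) ` Pow A" by auto
  then show "finite {g (card S) | S. S \<subseteq> A \<and> P (card S)}"
    using assms(1) finite_surj by blast
next
  fix y assume "y \<in> {g (card S) | S. S \<subseteq> A \<and> P (card S)}"
  then obtain S where S: "S \<subseteq> A" "P (card S)" "y = g (card S)" by auto
  then have "card S \<le> j\<^sub>0" using assms(1,4) card_mono by blast
  then show "y \<le> g j\<^sub>0" using S(3) assms(5) by (simp add: monoD)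
next
  obtain T where "T \<subseteq> A" "card T = j\<^sub>0" using obtain_subset_with_card_n[OF assms(2)] by blast
  then show "g j\<^sub>0 \<in> {g (card S) | S. S \<subseteq> A \<and> P (card S)}" using assms(3) by auto
qed

lemma price_uniform_le_iff:
  assumes "finite A" "n > 0" "\<And>j. real j * p \<le> T \<longleftrightarrow> j \<le> m" "S \<subseteq> A"
  shows "price (uniform_reward n) (uniform_cost n p) S \<le> ereal T \<longleftrightarrow> card S \<le> m"
  using price_uniform[OF rev_finite_subset[OF assms(1,4)] assms(2)] assms(3) by simp

lemma max_reward_uniform:
  assumes "finite A" "card A = n" "n > 0" "\<And>j. real j * p \<le> T \<longleftrightarrow> j \<le> m"
  shows "max_reward A (uniform_reward n) (uniform_cost n p) T = real (min m n) / real n"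
proof -
  have "{uniform_reward n S | S. S \<subseteq> A \<and> price (uniform_reward n) (uniform_cost n p) S \<le> ereal T}
      = {(\<lambda>j. real j / real n) (card S) | S. S \<subseteq> A \<and> card S \<le> m}"
    using price_uniform_le_iff[OF assms(1,3,4)] by (auto simp: uniform_reward_def)
  moreover have "mono (\<lambda>j. real j / real n)" by (intro monoI) (simp add: divide_right_mono)
  ultimately show ?thesis
    unfolding max_reward_def
    using Max_mono_card_subsets[of A "min m n" "\<lambda>j. j \<le> m"] assms(1,2) by simp
qed

lemma max_welfare_uniform:
  assumes "finite A" "card A = n" "n > 0" "p \<le> 1" "\<And>j. real j * p \<le> T \<longleftrightarrow> j \<le> m"
  shows "max_welfare A (uniform_reward n) (uniform_cost n p) T = real (min m n) * (1 - p) / real n"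
proof -
  have "uniform_reward n S - (\<Sum>i\<in>S. uniform_cost n p i) = real (card S) * (1 - p) / real n"
    for S :: "'a set"
    unfolding uniform_reward_def uniform_cost_def by (simp add: diff_divide_distrib right_diff_distrib)
  then have "{uniform_reward n S - (\<Sum>i\<in>S. uniform_cost n p i) | S.
          S \<subseteq> A \<and> price (uniform_reward n) (uniform_cost n p) S \<le> ereal T}
      = {(\<lambda>j. real j * (1 - p) / real n) (card S) | S. S \<subseteq> A \<and> card S \<le> m}"
    using price_uniform_le_iff[OF assms(1,3,5)] by auto
  moreover have "mono (\<lambda>j. real j * (1 - p) / real n)"
    using assms(4) by (intro monoI) (simp add: divide_right_mono mult_right_mono)
  ultimately show ?thesis
    unfolding max_welfare_def
    using Max_mono_card_subsets[of A "min m n" "\<lambda>j. j \<le> m"] assms(1,2) by simp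
qed

lemma budget_ratio_price:
  fixes b B :: real
  assumes "0 < b" "b < B"
  defines "k \<equiv> nat (\<lceil>2 * B / b\<rceil> - 1)"
  shows "int k = \<lceil>2 * B / b\<rceil> - 1" and "k \<ge> 2" and "B / real k \<le> b" and "b < 2 * (B / real k)"
proof -
  have ceil: "of_int \<lceil>2 * B / b\<rceil> - 1 < 2 * B / b" "2 * B / b \<le> of_int \<lceil>2 * B / b\<rceil>"
    using ceiling_correct by blast+
  have "2 < 2 * B / b" using assms(1,2) by (simp add: field_simps)
  then show int_k: "int k = \<lceil>2 * B / b\<rceil> - 1" and "k \<ge> 2" unfolding k_def using ceil by linarith+
  then have "real k = real_of_int \<lceil>2 * B / b\<rceil> - 1" and kpos: "real k > 0" by linarith+
  then have "2 * B / b - 1 \<le> real k" and "real k < 2 * B / b" using ceil by linarith+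
  then have "2 * B - b \<le> real k * b" and "real k * b < 2 * B" using assms(1) by (simp_all add: field_simps)
  then show "B / real k \<le> b" and "b < 2 * (B / real k)" using kpos assms(2) by (simp_all add: field_simps)
qed

lemma mult_le_iff_le_one:
  fixes q b :: real
  assumes "0 < q" "q \<le> b" "b < 2 * q"
  shows "real j * q \<le> b \<longleftrightarrow> j \<le> 1"
proof
  assume "real j * q \<le> b"
  then have "real j * q < 2 * q" using assms(3) by linarith
  then show "j \<le> 1" using assms(1) by simp
next
  assume "j \<le> 1"
  then have "real j * q \<le> 1 * q" using assms(1) by (intro mult_right_mono) simp_all
  then show "real j * q \<le> b" using assms(2) by simp
qed

theorem mainTheorem13:
  fixes b B :: real and n :: nat
  assumes "0 < b" "b < B" "B \<le> 1" "n \<ge> 1"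
  shows "\<exists>(A :: nat set) f c. is_instance A f c \<and> card A = n \<and> additive_on A f
           \<and> (\<forall>i\<in>A. price f c {i} \<le> ereal b)
           \<and> max_reward A f c B / max_reward A f c b
                = real_of_int (min (\<lceil>2 * B / b\<rceil> - 1) (int n))
           \<and> max_welfare A f c B / max_welfare A f c b
                = real_of_int (min (\<lceil>2 * B / b\<rceil> - 1) (int n))"
proof -
  define k where "k = nat (\<lceil>2 * B / b\<rceil> - 1)"
  define p where "p = B / real k"
  define A :: "nat set" where "A = {0..<n}"
  have int_k: "int k = \<lceil>2 * B / b\<rceil> - 1" and "k \<ge> 2" and "p \<le> b" and "b < 2 * p"
    using budget_ratio_price[OF assms(1,2)] unfolding k_def p_def by auto
  have "0 < p" "p < 1" using \<open>p \<le> b\<close> \<open>b < 2 * p\<close> assms by linarith+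
  have afford_B: "real j * p \<le> B \<longleftrightarrow> j \<le> k" for j
    using \<open>k \<ge> 2\<close> assms(1,2) by (simp add: p_def field_simps)
  have afford_b: "real j * p \<le> b \<longleftrightarrow> j \<le> 1" for j
    using mult_le_iff_le_one \<open>0 < p\<close> \<open>p \<le> b\<close> \<open>b < 2 * p\<close> by blast
  have A: "finite A" "card A = n" and "n > 0" using assms(4) by (auto simp: A_def)
  let ?f = "uniform_reward n" and ?c = "uniform_cost n p"
  have "max_reward A ?f ?c B / max_reward A ?f ?c b = real (min k n)"
    using \<open>n > 0\<close> by (simp add: max_reward_uniform[OF A \<open>n > 0\<close> afford_B]
                                  max_reward_uniform[OF A \<open>n > 0\<close> afford_b])
  moreover have "max_welfare A ?f ?c B / max_welfare A ?f ?c b = real (min k n)"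
    using \<open>n > 0\<close> \<open>p < 1\<close> by (simp add: max_welfare_uniform[OF A \<open>n > 0\<close> _ afford_B]
                                              max_welfare_uniform[OF A \<open>n > 0\<close> _ afford_b])
  moreover have "\<forall>i\<in>A. price ?f ?c {i} \<le> ereal b"
    using \<open>n > 0\<close> \<open>p \<le> b\<close> by (simp add: price_uniform)
  moreover have "real (min k n) = real_of_int (min (\<lceil>2 * B / b\<rceil> - 1) (int n))"
    unfolding int_k[symmetric] by simp
  ultimately show ?thesis
    using is_instance_uniform[OF A] additive_on_uniform[OF A(1)] A \<open>0 < p\<close>
    by (intro exI[of _ A] exI[of _ ?f] exI[of _ ?c]) auto
qed

end
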